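(* Let $f:\mathbb{R}\to\mathbb{R}$ be a concave function such that $f(0)=0$, $f$ is differentiable at $0$, $f'(0)\neq 0$, $\sup_x f(x)=M>0$, and $\operatorname{argsup}_x f(x)>0$. Let $\mathbb{P}$ and $\mathbb{Q}$ be probability distributions with support $\mathcal{X}$. Define $$\mathrm{D}^{S}(\mathbb{P},\mathbb{Q})=\sup_{C:\mathcal{X}\to\mathbb{R}}\mathbb{E}_{x\sim\mathbb{P}}[f(C(x))]+\mathbb{E}_{y\sim\mathbb{Q}}[f(-C(y))],$$ $$\mathrm{D}^{Rp}_f(\mathbb{P},\mathbb{Q})=\sup_{C:\mathcal{X}\to\mathbb{R}} 2\,\mathbb{E}_{x\sim\mathbb{P},\,y\sim\mathbb{Q}}\big[f(C(x)-C(y))\big],$$ $$\mathrm{D}^{Ralf}_f(\mathbb{P},\mathbb{Q})=\sup_{C:\mathcal{X}\to\mathbb{R}} 2\,\mathbb{E}_{x\sim\mathbb{P}}\Big[f\big(C(x)-\mathbb{E}_{y\sim\mathbb{Q}}C(y)\big)\Big],$$ $$\mathrm{D}^{Ra}_f(\mathbb{P},\mathbb{Q})=\sup_{C:\mathcal{X}\to\mathbb{R}} \mathbb{E}_{x\sim\mathbb{P}}\Big[f\big(C(x)-\mathbb{E}_{y\sim\mathbb{Q}}C(y)\big)\Big]+\mathbb{E}_{y\sim\mathbb{Q}}\Big[f\big(\mathbb{E}_{x\sim\mathbb{P}}C(x)-C(y)\big)\Big].$$ Then $\mathrm{D}^{S}(\mathbb{P},\mathbb{Q})\le \mathrm{D}^{Rp}_f(\mathbb{P},\mathbb{Q})$,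 $\mathrm{D}^{Rp}_f(\mathbb{P},\mathbb{Q})\le\mathrm{D}^{Ralf}_f(\mathbb{P},\mathbb{Q})$, and $\mathrm{D}^{Rp}_f(\mathbb{P},\mathbb{Q})\le\mathrm{D}^{Ra}_f(\mathbb{P},\mathbb{Q})$.
   Context: The suprema range over (measurable) critic functions $C:\mathcal{X}\to\mathbb{R}$ for which the expectations are defined. The condition $\operatorname{argsup}_x f(x)>0$ means the supremum of $f$ is reached at some positive $x$ (or approached as $x\to+\infty$). *)

theory Defs
  imports "HOL-Probability.Probability"
begin

definition argsup_pos :: "(real \<Rightarrow> real) \<Rightarrow> bool" where
  "argsup_pos f \<longleftrightarrow>
     (\<exists>x>0. f x = (SUP t. f t)) \<or> ((f \<longlongrightarrow> (SUP t. f t)) at_top)"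

definition D_S :: "(real \<Rightarrow> real) \<Rightarrow> 'a measure \<Rightarrow> 'a measure \<Rightarrow> real" where
  "D_S f P Q = (SUP C \<in> {C. C \<in> borel_measurable P
                         \<and> integrable P (\<lambda>x. f (C x))
                         \<and> integrable Q (\<lambda>y. f (- C y))}.
      (\<integral>x. f (C x) \<partial>P) + (\<integral>y. f (- C y) \<partial>Q))"

definition D_Rp :: "(real \<Rightarrow> real) \<Rightarrow> 'a measure \<Rightarrow> 'a measure \<Rightarrow> real" where
  "D_Rp f P Q = (SUP C \<in> {C. C \<in> borel_measurable P
                         \<and> integrable (P \<Otimes>\<^sub>M Q) (\<lambda>z. f (C (fst z) - C (snd z)))}.
      2 * (\<integral>z. f (C (fst z) - C (snd z)) \<partial>(P \<Otimes>\<^sub>M Q)))"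

definition D_Ralf :: "(real \<Rightarrow> real) \<Rightarrow> 'a measure \<Rightarrow> 'a measure \<Rightarrow> real" where
  "D_Ralf f P Q = (SUP C \<in> {C. C \<in> borel_measurable P
                         \<and> integrable Q C
                         \<and> integrable P (\<lambda>x. f (C x - (\<integral>y. C y \<partial>Q)))}.
      2 * (\<integral>x. f (C x - (\<integral>y. C y \<partial>Q)) \<partial>P))"

definition D_Ra :: "(real \<Rightarrow> real) \<Rightarrow> 'a measure \<Rightarrow> 'a measure \<Rightarrow> real" where
  "D_Ra f P Q = (SUP C \<in> {C. C \<in> borel_measurable P
                         \<and> integrable P C \<and> integrable Q C
                         \<and> integrable P (\<lambda>x. f (C x - (\<integral>y. C y \<partial>Q)))
                         \<and> integrable Q (\<lambda>y. f ((\<integral>x. C x \<partial>P) - C y))}.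
      (\<integral>x. f (C x - (\<integral>y. C y \<partial>Q)) \<partial>P) + (\<integral>y. f ((\<integral>x. C x \<partial>P) - C y) \<partial>Q))"

end

theory Submission
  imports Defs
begin

text \<open>
  D_S \<le> D_Rp: given a critic C, the critic C/2 does at least as well for D_Rp, because midpoint
  concavity gives f (C x / 2 - C y / 2) \<ge> (f (C x) + f (- C y)) / 2.

  D_Rp \<le> D_Ralf and D_Rp \<le> D_Ra: for a bounded critic, Jensen's inequality in y gives
  E_y f (C x - C y) \<le> f (C x - E C), and Fubini integrates this over x (and symmetrically with
  x and y exchanged). A general critic is the limit of its truncations at \<plusminus>n. The truncated
  differences lie between 0 and C x - C y, so by concavity and the upper bound M the truncated
  objectives are dominated by |f 0| + |M| + |f (C x - C y)|, and dominated convergence carries the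
  bound over.
\<close>

lemma concave_on_ge_min_closed_segment:
  assumes "concave_on A f" "a \<in> A" "b \<in> A" "s \<in> closed_segment a b"
  shows "min (f a) (f b) \<le> f s"
proof -
  obtain u where u: "0 \<le> u" "u \<le> 1" and s: "s = (1 - u) *\<^sub>R a + u *\<^sub>R b"
    using assms(4) by (auto simp: closed_segment_def)
  have "(1 - u) * min (f a) (f b) \<le> (1 - u) * f a" "u * min (f a) (f b) \<le> u * f b"
    using u by (auto intro: mult_left_mono)
  then have "min (f a) (f b) \<le> (1 - u) * f a + u * f b"
    by (simp add: algebra_simps)
  also have "\<dots> \<le> f s"
    using concave_onD[OF assms(1) u assms(2,3)] s by simp
  finally show ?thesis .
qed

lemma concave_on_midpoint:
  assumes "concave_on A f" "a \<in> A" "b \<in> A"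
  shows "(f a + f b) / 2 \<le> f (midpoint a b)"
  using concave_onD[OF assms(1), of "1/2" a b] assms(2,3)
  by (simp add: midpoint_def scaleR_right_distrib)

lemma concave_on_continuous:
  fixes f :: "'a::euclidean_space \<Rightarrow> real"
  assumes "open S" "concave_on S f"
  shows "continuous_on S f"
  using continuous_on_minus[OF convex_on_continuous[OF assms(1), of "\<lambda>x. - f x"]] assms(2)
  by (simp add: concave_on_def)

lemma (in prob_space) jensens_inequality_concave:
  fixes q :: "real \<Rightarrow> real"
  assumes "integrable M X" "integrable M (\<lambda>x. q (X x))" "concave_on UNIV q"
  shows "expectation (\<lambda>x. q (X x)) \<le> q (expectation X)"
  using jensens_inequality[of X UNIV _ _ "\<lambda>x. - q x"] assms by (simp add: concave_on_def)

lemma (in prob_space) distr_pair_snd: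
  assumes "sigma_finite_measure N"
  shows "distr (M \<Otimes>\<^sub>M N) N snd = N"
proof (intro measure_eqI)
  fix A assume A: "A \<in> sets (distr (M \<Otimes>\<^sub>M N) N snd)"
  then have "emeasure (distr (M \<Otimes>\<^sub>M N) N snd) A = emeasure (M \<Otimes>\<^sub>M N) (space M \<times> A)"
    by (auto simp add: emeasure_distr space_pair_measure dest: sets.sets_into_space
        intro!: arg_cong2[where f=emeasure])
  with A show "emeasure (distr (M \<Otimes>\<^sub>M N) N snd) A = emeasure N A"
    by (simp add: sigma_finite_measure.emeasure_pair_measure_Times[OF assms] emeasure_space_1)
qed simp

context pair_prob_space
begin

lemma
  fixes g :: "'a \<Rightarrow> 'c::{banach,second_countable_topology}"
  assumes "integrable M1 g"
  shows integrable_pair_fst: "integrable (M1 \<Otimes>\<^sub>M M2) (\<lambda>z. g (fst z))"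
    and integral_pair_fst: "(\<integral>z. g (fst z) \<partial>(M1 \<Otimes>\<^sub>M M2)) = integral\<^sup>L M1 g"
  using integrable_distr_eq[of fst "M1 \<Otimes>\<^sub>M M2" M1 g, unfolded M2.distr_pair_fst]
    integral_distr[of fst "M1 \<Otimes>\<^sub>M M2" M1 g, unfolded M2.distr_pair_fst] assms by auto

lemma
  fixes g :: "'b \<Rightarrow> 'c::{banach,second_countable_topology}"
  assumes "integrable M2 g"
  shows integrable_pair_snd: "integrable (M1 \<Otimes>\<^sub>M M2) (\<lambda>z. g (snd z))"
    and integral_pair_snd: "(\<integral>z. g (snd z) \<partial>(M1 \<Otimes>\<^sub>M M2)) = integral\<^sup>L M2 g"
  using integrable_distr_eq[of snd "M1 \<Otimes>\<^sub>M M2" M2 g, unfolded M1.distr_pair_snd[OF M2.sigma_finite_measure_axioms]]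
    integral_distr[of snd "M1 \<Otimes>\<^sub>M M2" M2 g, unfolded M1.distr_pair_snd[OF M2.sigma_finite_measure_axioms]]
    assms by auto

end

lemma (in finite_measure) integrable_continuous_comp_bounded:
  fixes g :: "'b::{heine_borel,real_normed_vector} \<Rightarrow> 'c::{banach,second_countable_topology}"
  assumes "continuous_on UNIV g" "X \<in> borel_measurable M" "\<And>x. norm (X x) \<le> B"
  shows "integrable M (\<lambda>x. g (X x))"
proof -
  have "bounded (g ` cball 0 B)"
    using assms(1) by (intro compact_imp_bounded compact_continuous_image)
      (auto intro: continuous_on_subset)
  then obtain K where K: "\<forall>t\<in>cball 0 B. norm (g t) \<le> K"
    by (auto simp: bounded_iff)
  show ?thesis
  proof (rule integrable_const_bound[where B=K])
    show "AE x in M. norm (g (X x)) \<le> K"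
      using K assms(3) by (intro AE_I2) (simp add: dist_norm)
    show "(\<lambda>x. g (X x)) \<in> borel_measurable M"
      using borel_measurable_continuous_onI[OF assms(1)] assms(2) by measurable
  qed
qed

definition clip :: "real \<Rightarrow> real \<Rightarrow> real" where
  "clip r t = max (- r) (min r t)"

lemma clip_diff_in_closed_segment: "clip r a - clip r b \<in> closed_segment 0 (a - b)"
  by (auto simp: clip_def closed_segment_eq_real_ivl max_def min_def)

locale gan_divergences = pair_prob_space P Q for P Q :: "'a measure" +
  fixes f :: "real \<Rightarrow> real" and M :: real
  assumes concave: "concave_on UNIV f"
    and le_bound: "\<And>t. f t \<le> M"
    and sets_eq: "sets P = sets Q"
begin

lemma measurable_critic_Q: "C \<in> borel_measurable P \<Longrightarrow> C \<in> borel_measurable Q"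
  using measurable_cong_sets[OF sets_eq refl] by blast

lemma measurable_f[measurable]: "f \<in> borel_measurable borel"
  using concave_on_continuous[OF open_UNIV concave] by (rule borel_measurable_continuous_onI)

lemma D_Rp_upper:
  assumes "C \<in> borel_measurable P" "integrable (P \<Otimes>\<^sub>M Q) (\<lambda>z. f (C (fst z) - C (snd z)))"
  shows "2 * (\<integral>z. f (C (fst z) - C (snd z)) \<partial>(P \<Otimes>\<^sub>M Q)) \<le> D_Rp f P Q"
  unfolding D_Rp_def using assms
  by (intro cSUP_upper bdd_aboveI2[where M="2 * M"]) (auto intro!: P.integral_le_const le_bound)

lemma D_Ralf_upper:
  assumes "C \<in> borel_measurable P" "integrable Q C" "integrable P (\<lambda>x. f (C x - (\<integral>y. C y \<partial>Q)))"
  shows "2 * (\<integral>x. f (C x - (\<integral>y. C y \<partial>Q)) \<partial>P) \<le> D_Ralf f P Q"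
  unfolding D_Ralf_def using assms
  by (intro cSUP_upper bdd_aboveI2[where M="2 * M"]) (auto intro!: M1.integral_le_const le_bound)

lemma D_Ra_upper:
  assumes "C \<in> borel_measurable P" "integrable P C" "integrable Q C"
    "integrable P (\<lambda>x. f (C x - (\<integral>y. C y \<partial>Q)))" "integrable Q (\<lambda>y. f ((\<integral>x. C x \<partial>P) - C y))"
  shows "(\<integral>x. f (C x - (\<integral>y. C y \<partial>Q)) \<partial>P) + (\<integral>y. f ((\<integral>x. C x \<partial>P) - C y) \<partial>Q) \<le> D_Ra f P Q"
  unfolding D_Ra_def using assms
  by (intro cSUP_upper bdd_aboveI2)
    (auto intro!: add_mono[where b=M and d=M] M1.integral_le_const M2.integral_le_const le_bound)

context
  fixes C :: "'a \<Rightarrow> real" and B :: real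
  assumes measurable_C: "C \<in> borel_measurable P" and bounded_C: "\<And>x. \<bar>C x\<bar> \<le> B"
begin

lemma measurable_C_Q: "C \<in> borel_measurable Q"
  using measurable_critic_Q[OF measurable_C] .

lemma integrable_bounded_critic:
  shows "integrable P C" "integrable Q C"
  using bounded_C measurable_C measurable_C_Q
  by (auto intro!: M1.integrable_const_bound[where B=B] M2.integrable_const_bound[where B=B])

lemma integrable_f_bounded_critic:
  shows "integrable (P \<Otimes>\<^sub>M Q) (\<lambda>z. f (C (fst z) - C (snd z)))"
    and "integrable P (\<lambda>x. f (C x - c))" "integrable Q (\<lambda>y. f (c - C y))"
proof -
  note f_cont = concave_on_continuous[OF open_UNIV concave]
  note [measurable] = measurable_C measurable_C_Q
  have "\<bar>C x - C y\<bar> \<le> 2 * B" "\<bar>C x - c\<bar> \<le> B + \<bar>c\<bar>" "\<bar>c - C x\<bar> \<le> B + \<bar>c\<bar>" for x y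
    using bounded_C[of x] bounded_C[of y] by arith+
  then show "integrable (P \<Otimes>\<^sub>M Q) (\<lambda>z. f (C (fst z) - C (snd z)))"
    and "integrable P (\<lambda>x. f (C x - c))" "integrable Q (\<lambda>y. f (c - C y))"
    by (simp_all add: P.integrable_continuous_comp_bounded[OF f_cont, where B="2 * B"]
        M1.integrable_continuous_comp_bounded[OF f_cont, where B="B + \<bar>c\<bar>"]
        M2.integrable_continuous_comp_bounded[OF f_cont, where B="B + \<bar>c\<bar>"])
qed

lemma integral_paired_le_average_P:
  "(\<integral>z. f (C (fst z) - C (snd z)) \<partial>(P \<Otimes>\<^sub>M Q)) \<le> (\<integral>x. f (C x - (\<integral>y. C y \<partial>Q)) \<partial>P)"
proof -
  note int_paired = integrable_f_bounded_critic(1)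
  have jensen: "(\<integral>y. f (C x - C y) \<partial>Q) \<le> f (C x - (\<integral>y. C y \<partial>Q))" for x
    using M2.jensens_inequality_concave[where X="\<lambda>y. C x - C y",
        OF _ integrable_f_bounded_critic(3)[of "C x"] concave]
      integrable_bounded_critic(2) by (simp add: M2.prob_space)
  have "(\<integral>z. f (C (fst z) - C (snd z)) \<partial>(P \<Otimes>\<^sub>M Q)) = (\<integral>x. (\<integral>y. f (C x - C y) \<partial>Q) \<partial>P)"
    using integral_fst'[OF int_paired] by simp
  also have "\<dots> \<le> (\<integral>x. f (C x - (\<integral>y. C y \<partial>Q)) \<partial>P)"
    using integrable_fst'[OF int_paired] integrable_f_bounded_critic(2) jensen
    by (intro integral_mono) simp_all
  finally show ?thesis .
qed

lemma integral_paired_le_average_Q: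
  "(\<integral>z. f (C (fst z) - C (snd z)) \<partial>(P \<Otimes>\<^sub>M Q)) \<le> (\<integral>y. f ((\<integral>x. C x \<partial>P) - C y) \<partial>Q)"
proof -
  have int_paired: "integrable (P \<Otimes>\<^sub>M Q) (\<lambda>(x, y). f (C x - C y))"
    using integrable_f_bounded_critic(1) by (simp add: split_beta')
  have jensen: "(\<integral>x. f (C x - C y) \<partial>P) \<le> f ((\<integral>x. C x \<partial>P) - C y)" for y
    using M1.jensens_inequality_concave[where X="\<lambda>x. C x - C y",
        OF _ integrable_f_bounded_critic(2)[of "C y"] concave]
      integrable_bounded_critic(1) by (simp add: M1.prob_space)
  have "(\<integral>z. f (C (fst z) - C (snd z)) \<partial>(P \<Otimes>\<^sub>M Q)) = (\<integral>y. (\<integral>x. f (C x - C y) \<partial>P) \<partial>Q)"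
    using integral_snd[OF int_paired] by (simp add: split_beta')
  also have "\<dots> \<le> (\<integral>y. f ((\<integral>x. C x \<partial>P) - C y) \<partial>Q)"
    using integrable_snd[OF int_paired] integrable_f_bounded_critic(3) jensen
    by (intro integral_mono) simp_all
  finally show ?thesis .
qed

end

lemma integral_paired_clip_tendsto:
  assumes C[measurable]: "C \<in> borel_measurable P"
    and int: "integrable (P \<Otimes>\<^sub>M Q) (\<lambda>z. f (C (fst z) - C (snd z)))"
  shows "(\<lambda>n. \<integral>z. f (clip (real n) (C (fst z)) - clip (real n) (C (snd z))) \<partial>(P \<Otimes>\<^sub>M Q))
    \<longlonglongrightarrow> (\<integral>z. f (C (fst z) - C (snd z)) \<partial>(P \<Otimes>\<^sub>M Q))"
proof (rule integral_dominated_convergence[where w="\<lambda>z. \<bar>f 0\<bar> + \<bar>M\<bar> + \<bar>f (C (fst z) - C (snd z))\<bar>"])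
  have [measurable]: "C \<in> borel_measurable Q"
    using measurable_critic_Q[OF C] .
  show "(\<lambda>z. f (C (fst z) - C (snd z))) \<in> borel_measurable (P \<Otimes>\<^sub>M Q)"
    by measurable
  show "(\<lambda>z. f (clip (real n) (C (fst z)) - clip (real n) (C (snd z)))) \<in> borel_measurable (P \<Otimes>\<^sub>M Q)" for n
    unfolding clip_def by measurable
  show "integrable (P \<Otimes>\<^sub>M Q) (\<lambda>z. \<bar>f 0\<bar> + \<bar>M\<bar> + \<bar>f (C (fst z) - C (snd z))\<bar>)"
    using int by (intro Bochner_Integration.integrable_add P.integrable_const integrable_abs)
  show "AE z in P \<Otimes>\<^sub>M Q. (\<lambda>n. f (clip (real n) (C (fst z)) - clip (real n) (C (snd z))))
      \<longlonglongrightarrow> f (C (fst z) - C (snd z))"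
  proof (intro AE_I2 tendsto_eventually eventually_sequentiallyI)
    fix z :: "'a \<times> 'a" and n :: nat
    assume "nat \<lceil>\<bar>C (fst z)\<bar> + \<bar>C (snd z)\<bar>\<rceil> \<le> n"
    then have "\<bar>C (fst z)\<bar> \<le> real n" "\<bar>C (snd z)\<bar> \<le> real n"
      by linarith+
    then show "f (clip (real n) (C (fst z)) - clip (real n) (C (snd z))) = f (C (fst z) - C (snd z))"
      by (simp add: clip_def)
  qed
  show "AE z in P \<Otimes>\<^sub>M Q. norm (f (clip (real n) (C (fst z)) - clip (real n) (C (snd z))))
      \<le> \<bar>f 0\<bar> + \<bar>M\<bar> + \<bar>f (C (fst z) - C (snd z))\<bar>" for n
  proof (intro AE_I2)
    fix z :: "'a \<times> 'a"
    have "min (f 0) (f (C (fst z) - C (snd z))) \<le> f (clip (real n) (C (fst z)) - clip (real n) (C (snd z)))"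
      using concave_on_ge_min_closed_segment[OF concave _ _ clip_diff_in_closed_segment] by simp
    then show "norm (f (clip (real n) (C (fst z)) - clip (real n) (C (snd z))))
      \<le> \<bar>f 0\<bar> + \<bar>M\<bar> + \<bar>f (C (fst z) - C (snd z))\<bar>"
      using le_bound[of "clip (real n) (C (fst z)) - clip (real n) (C (snd z))"] by (simp add: real_norm_def)
  qed
qed

lemma D_Rp_le_if_bounded_critics:
  assumes bounded: "\<And>C B. C \<in> borel_measurable P \<Longrightarrow> (\<And>x. \<bar>C x\<bar> \<le> B) \<Longrightarrow>
      2 * (\<integral>z. f (C (fst z) - C (snd z)) \<partial>(P \<Otimes>\<^sub>M Q)) \<le> D"
  shows "D_Rp f P Q \<le> D"
  unfolding D_Rp_def
proof (rule cSUP_least)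
  show "{C. C \<in> borel_measurable P \<and> integrable (P \<Otimes>\<^sub>M Q) (\<lambda>z. f (C (fst z) - C (snd z)))} \<noteq> {}"
    using P.integrable_const[of "f 0"] by (auto intro!: exI[of _ "\<lambda>_. 0"])
next
  fix C assume "C \<in> {C. C \<in> borel_measurable P \<and> integrable (P \<Otimes>\<^sub>M Q) (\<lambda>z. f (C (fst z) - C (snd z)))}"
  then have C: "C \<in> borel_measurable P" and int: "integrable (P \<Otimes>\<^sub>M Q) (\<lambda>z. f (C (fst z) - C (snd z)))"
    by auto
  have "2 * (\<integral>z. f (clip (real n) (C (fst z)) - clip (real n) (C (snd z))) \<partial>(P \<Otimes>\<^sub>M Q)) \<le> D" for n
    using C by (intro bounded[of _ "real n"]) (auto simp: clip_def)
  then show "2 * (\<integral>z. f (C (fst z) - C (snd z)) \<partial>(P \<Otimes>\<^sub>M Q)) \<le> D"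
    by (intro LIMSEQ_le_const2[OF tendsto_mult_left[OF integral_paired_clip_tendsto[OF C int]]]) auto
qed

lemma D_Rp_le_D_Ralf: "D_Rp f P Q \<le> D_Ralf f P Q"
proof (rule D_Rp_le_if_bounded_critics)
  fix C :: "'a \<Rightarrow> real" and B :: real
  assume C: "C \<in> borel_measurable P" "\<And>x. \<bar>C x\<bar> \<le> B"
  have "2 * (\<integral>z. f (C (fst z) - C (snd z)) \<partial>(P \<Otimes>\<^sub>M Q)) \<le> 2 * (\<integral>x. f (C x - (\<integral>y. C y \<partial>Q)) \<partial>P)"
    using integral_paired_le_average_P[OF C] by simp
  also have "\<dots> \<le> D_Ralf f P Q"
    using C by (intro D_Ralf_upper integrable_bounded_critic integrable_f_bounded_critic)
  finally show "2 * (\<integral>z. f (C (fst z) - C (snd z)) \<partial>(P \<Otimes>\<^sub>M Q)) \<le> D_Ralf f P Q" .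
qed

lemma D_Rp_le_D_Ra: "D_Rp f P Q \<le> D_Ra f P Q"
proof (rule D_Rp_le_if_bounded_critics)
  fix C :: "'a \<Rightarrow> real" and B :: real
  assume C: "C \<in> borel_measurable P" "\<And>x. \<bar>C x\<bar> \<le> B"
  have "2 * (\<integral>z. f (C (fst z) - C (snd z)) \<partial>(P \<Otimes>\<^sub>M Q))
      \<le> (\<integral>x. f (C x - (\<integral>y. C y \<partial>Q)) \<partial>P) + (\<integral>y. f ((\<integral>x. C x \<partial>P) - C y) \<partial>Q)"
    using integral_paired_le_average_P[OF C] integral_paired_le_average_Q[OF C] by simp
  also have "\<dots> \<le> D_Ra f P Q"
    using C by (intro D_Ra_upper integrable_bounded_critic integrable_f_bounded_critic)
  finally show "2 * (\<integral>z. f (C (fst z) - C (snd z)) \<partial>(P \<Otimes>\<^sub>M Q)) \<le> D_Ra f P Q" .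
qed

lemma D_S_le_D_Rp: "D_S f P Q \<le> D_Rp f P Q"
  unfolding D_S_def
proof (rule cSUP_least)
  show "{C. C \<in> borel_measurable P \<and> integrable P (\<lambda>x. f (C x)) \<and> integrable Q (\<lambda>y. f (- C y))} \<noteq> {}"
    using M1.integrable_const[of "f 0"] M2.integrable_const[of "f 0"] by (auto intro!: exI[of _ "\<lambda>_. 0"])
next
  fix C assume "C \<in> {C. C \<in> borel_measurable P \<and> integrable P (\<lambda>x. f (C x)) \<and> integrable Q (\<lambda>y. f (- C y))}"
  then have C[measurable]: "C \<in> borel_measurable P"
    and int_P: "integrable P (\<lambda>x. f (C x))" and int_Q: "integrable Q (\<lambda>y. f (- C y))"
    by auto
  have [measurable]: "C \<in> borel_measurable Q"
    using measurable_critic_Q[OF C] .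
  define lower where "lower z = (f (C (fst z)) + f (- C (snd z))) / 2" for z
  define half where "half z = f (C (fst z) / 2 - C (snd z) / 2)" for z
  have lower_le_half: "lower z \<le> half z" for z
    using concave_on_midpoint[OF concave, of "C (fst z)" "- C (snd z)"]
    by (simp add: lower_def half_def midpoint_def diff_divide_distrib)
  have int_lower: "integrable (P \<Otimes>\<^sub>M Q) lower"
    using int_P int_Q unfolding lower_def
    by (intro integrable_divide Bochner_Integration.integrable_add integrable_pair_fst integrable_pair_snd)
  have int_half: "integrable (P \<Otimes>\<^sub>M Q) half"
  proof (rule Bochner_Integration.integrable_bound)
    show "integrable (P \<Otimes>\<^sub>M Q) (\<lambda>z. \<bar>lower z\<bar> + \<bar>M\<bar>)"
      using int_lower by (intro Bochner_Integration.integrable_add P.integrable_const integrable_abs)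
    show "half \<in> borel_measurable (P \<Otimes>\<^sub>M Q)"
      unfolding half_def by measurable
    show "AE z in P \<Otimes>\<^sub>M Q. norm (half z) \<le> norm (\<bar>lower z\<bar> + \<bar>M\<bar>)"
    proof (intro AE_I2)
      fix z
      have "lower z \<le> half z" "half z \<le> M"
        using lower_le_half le_bound unfolding half_def by auto
      then show "norm (half z) \<le> norm (\<bar>lower z\<bar> + \<bar>M\<bar>)"
        unfolding real_norm_def by arith
    qed
  qed
  have "(\<integral>x. f (C x) \<partial>P) + (\<integral>y. f (- C y) \<partial>Q) = 2 * (\<integral>z. lower z \<partial>(P \<Otimes>\<^sub>M Q))"
    unfolding lower_def
    by (simp add: Bochner_Integration.integral_add[OF integrable_pair_fst[OF int_P] integrable_pair_snd[OF int_Q]]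
        integral_pair_fst[OF int_P] integral_pair_snd[OF int_Q])
  also have "\<dots> \<le> 2 * (\<integral>z. half z \<partial>(P \<Otimes>\<^sub>M Q))"
    using integral_mono[OF int_lower int_half lower_le_half] by simp
  also have "\<dots> \<le> D_Rp f P Q"
    using D_Rp_upper[of "\<lambda>x. C x / 2"] int_half unfolding half_def by simp
  finally show "(\<integral>x. f (C x) \<partial>P) + (\<integral>y. f (- C y) \<partial>Q) \<le> D_Rp f P Q" .
qed

end

theorem mainTheorem3:
  fixes f :: "real \<Rightarrow> real" and P Q :: "'a measure" and M :: real
  assumes "concave_on UNIV f"
    and "f 0 = 0"
    and "f differentiable (at 0)"
    and "deriv f 0 \<noteq> 0"
    and "bdd_above (range f)"
    and "(SUP x. f x) = M" and "M > 0"
    and "argsup_pos f"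
    and "prob_space P" and "prob_space Q"
    and "sets P = sets Q"
  shows "D_S f P Q \<le> D_Rp f P Q \<and> D_Rp f P Q \<le> D_Ralf f P Q \<and> D_Rp f P Q \<le> D_Ra f P Q"
proof -
  have le_M: "f t \<le> M" for t
    using assms(5,6) by (metis cSUP_upper UNIV_I)
  interpret pair_prob_space P Q
    using assms(9,10) by (simp add: pair_prob_space_def pair_sigma_finite_def prob_space_imp_sigma_finite)
  interpret gan_divergences P Q f M
    using assms(1,11) le_M by unfold_locales
  show ?thesis
    using D_S_le_D_Rp D_Rp_le_D_Ralf D_Rp_le_D_Ra by simp
qed

end
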